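(* For $n\ge 1$, $\left|\Pi_n\wr C_2(1^12^1,1^22^1)\right|=2^n+n-1$.
   Context: For $n\ge0$ let $[n]=\{1,\dots,n\}$. A $2$-colored set partition of $[n]$ is a set partition of $[n]$ together with an assignment of a color from $\{1,2\}$ to each element; $\Pi_n\wr C_2$ is the set of these. For a set $S$ of patterns, $\Pi_n\wr C_2(S)$ is the set of such colored partitions avoiding every pattern in $S$ in the pattern sense. For the two patterns used here: $\sigma$ contains $1^12^1$ iff there are two elements in different blocks with the same color; $\sigma$ contains $1^22^1$ iff there are $i<j$ in different blocks with $i$ colored $2$ and $j$ colored $1$. *)

theory Defs
  imports Main "HOL-Library.Disjoint_Sets" "HOL-Library.FuncSet"
begin

definition colored_partitions :: "nat \<Rightarrow> (nat set set \<times> (nat \<Rightarrow> nat)) set" where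
  "colored_partitions n =
     {(P, c). partition_on {1..n} P \<and> c \<in> {1..n} \<rightarrow>\<^sub>E {1, 2}}"

definition same_block :: "nat set set \<Rightarrow> nat \<Rightarrow> nat \<Rightarrow> bool" where
  "same_block P i j \<longleftrightarrow> (\<exists>B\<in>P. i \<in> B \<and> j \<in> B)"

definition contains_p11_21 :: "nat set set \<times> (nat \<Rightarrow> nat) \<Rightarrow> bool" where
  "contains_p11_21 \<sigma> = (case \<sigma> of (P, c) \<Rightarrow>
     (\<exists>i\<in>\<Union>P. \<exists>j\<in>\<Union>P. \<not> same_block P i j \<and> c i = c j))"

definition contains_p12_21 :: "nat set set \<times> (nat \<Rightarrow> nat) \<Rightarrow> bool" where
  "contains_p12_21 \<sigma> = (case \<sigma> of (P, c) \<Rightarrow>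
     (\<exists>i\<in>\<Union>P. \<exists>j\<in>\<Union>P. i < j \<and> \<not> same_block P i j \<and> c i = 2 \<and> c j = 1))"

end

theory Submission
  imports Defs
begin

text \<open>Avoiding \<open>1\<^sup>12\<^sup>1\<close> forces each colour class into a single block, so every block is a
  union of colour classes: either there is one block (and any of the \<open>2\<^sup>n\<close> colourings is
  allowed), or the two blocks are exactly the two colour classes. Avoiding \<open>1\<^sup>22\<^sup>1\<close> then
  forces all elements coloured 1 to precede those coloured 2, so the colour classes are
  \<open>{1..k}\<close> and \<open>{k+1..n}\<close> for some \<open>1 \<le> k < n\<close>, giving \<open>n - 1\<close> further partitions.\<close>

lemma partition_on_eq_singleton:
  assumes "partition_on A P" and "A \<in> P"
  shows "P = {A}"
proof -
  have "B = A" if "B \<in> P" for B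
  proof -
    have "B \<noteq> {}" using \<open>B \<in> P\<close> partition_onD3[OF assms(1)] by blast
    then obtain x where "x \<in> B" by blast
    moreover have "x \<in> A" using \<open>x \<in> B\<close> \<open>B \<in> P\<close> partition_onD1[OF assms(1)] by blast
    ultimately show "B = A"
      using disjointD[OF partition_onD2[OF assms(1)] \<open>B \<in> P\<close> \<open>A \<in> P\<close>] by blast
  qed
  then show ?thesis using assms(2) by blast
qed

lemma block_eq_colour_preimage:
  assumes P: "partition_on A P" and B: "B \<in> P"
    and same_colour: "\<And>x y. x \<in> A \<Longrightarrow> y \<in> A \<Longrightarrow> c x = c y \<Longrightarrow> same_block P x y"
  shows "B = {x \<in> A. c x \<in> c ` B}"
proof
  show "B \<subseteq> {x \<in> A. c x \<in> c ` B}" using B partition_onD1[OF P] by blast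
  show "{x \<in> A. c x \<in> c ` B} \<subseteq> B"
  proof
    fix x assume "x \<in> {x \<in> A. c x \<in> c ` B}"
    then obtain y where x: "x \<in> A" and y: "y \<in> B" and "c x = c y" by blast
    moreover have "y \<in> A" using y B partition_onD1[OF P] by blast
    ultimately obtain B' where "B' \<in> P" "x \<in> B'" "y \<in> B'"
      using same_colour unfolding same_block_def by blast
    then show "x \<in> B" using y disjointD[OF partition_onD2[OF P] B] by blast
  qed
qed

lemma partition_cases_two_colour_classes:
  assumes P: "partition_on A P" and "A \<noteq> {}" and c: "c \<in> A \<rightarrow> {a, b}"
    and same_colour: "\<And>x y. x \<in> A \<Longrightarrow> y \<in> A \<Longrightarrow> c x = c y \<Longrightarrow> same_block P x y"
  shows "P = {A} \<or> P = {{x \<in> A. c x = a}, {x \<in> A. c x = b}}"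
proof (cases "A \<in> P")
  case True
  then show ?thesis using partition_on_eq_singleton[OF P] by blast
next
  case False
  have "B = {x \<in> A. c x = a} \<or> B = {x \<in> A. c x = b}" if "B \<in> P" for B
  proof -
    have B_eq: "B = {x \<in> A. c x \<in> c ` B}"
      using block_eq_colour_preimage[OF P \<open>B \<in> P\<close> same_colour] .
    have "B \<noteq> {}" using \<open>B \<in> P\<close> partition_onD3[OF P] by blast
    moreover have "c ` B \<subseteq> {a, b}" using c \<open>B \<in> P\<close> partition_onD1[OF P] by blast
    ultimately have "c ` B = {a} \<or> c ` B = {b} \<or> c ` B = {a, b}" by blast
    moreover have "c ` B \<noteq> {a, b}"
    proof
      assume "c ` B = {a, b}"
      then have "B = A" using B_eq c by auto
      then show False using False \<open>B \<in> P\<close> by simp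
    qed
    ultimately show ?thesis using B_eq by auto
  qed
  then have "P \<subseteq> {{x \<in> A. c x = a}, {x \<in> A. c x = b}}" by blast
  moreover have "P \<noteq> {}" using \<open>A \<noteq> {}\<close> partition_onD1[OF P] by blast
  ultimately consider "P = {{x \<in> A. c x = a}}" | "P = {{x \<in> A. c x = b}}"
    | "P = {{x \<in> A. c x = a}, {x \<in> A. c x = b}}" by blast
  then show ?thesis using partition_onD1[OF P] by cases auto
qed

lemma initial_segment_eq_atLeastAtMost:
  fixes L :: "nat set"
  assumes L: "L \<subseteq> {1..n}" "L \<noteq> {}"
    and before: "\<And>x y. x \<in> L \<Longrightarrow> y \<in> {1..n} \<Longrightarrow> y \<notin> L \<Longrightarrow> x < y"
  shows "L = {1..Max L}"
proof -
  have "finite L" using L(1) finite_subset by blast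
  then have "Max L \<in> L" and le_Max: "\<And>x. x \<in> L \<Longrightarrow> x \<le> Max L" using L(2) by auto
  show ?thesis
  proof
    show "L \<subseteq> {1..Max L}" using L(1) le_Max by fastforce
    show "{1..Max L} \<subseteq> L"
    proof
      fix y assume y: "y \<in> {1..Max L}"
      then have "y \<in> {1..n}" using \<open>Max L \<in> L\<close> L(1) by auto
      then show "y \<in> L" using before[OF \<open>Max L \<in> L\<close>] y by force
    qed
  qed
qed

definition avoiders :: "nat \<Rightarrow> (nat set set \<times> (nat \<Rightarrow> nat)) set" where
  "avoiders n = {\<sigma> \<in> colored_partitions n. \<not> contains_p11_21 \<sigma> \<and> \<not> contains_p12_21 \<sigma>}"

definition split_partition :: "nat \<Rightarrow> nat \<Rightarrow> nat set set \<times> (nat \<Rightarrow> nat)" where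
  "split_partition n k = ({{1..k}, {Suc k..n}}, restrict (\<lambda>i. if i \<le> k then 1 else 2) {1..n})"

lemma one_block_in_avoiders:
  assumes "n \<ge> 1" and "c \<in> {1..n} \<rightarrow>\<^sub>E {1, 2}"
  shows "({{1..n}}, c) \<in> avoiders n"
  using assms partition_on_space[of "{1..n}"]
  unfolding avoiders_def colored_partitions_def contains_p11_21_def contains_p12_21_def
    same_block_def
  by auto

lemma same_block_split_iff:
  assumes "i \<in> {1..n}" and "j \<in> {1..n}"
  shows "same_block {{1..k}, {Suc k..n}} i j \<longleftrightarrow> (i \<le> k \<longleftrightarrow> j \<le> k)"
  using assms unfolding same_block_def by auto

lemma split_partition_in_avoiders:
  assumes k: "k \<in> {1..<n}"
  shows "split_partition n k \<in> avoiders n"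
proof -
  let ?P = "{{1..k}, {Suc k..n}}" and ?c = "restrict (\<lambda>i. if i \<le> k then 1 else 2::nat) {1..n}"
  have P: "partition_on {1..n} ?P"
    using k unfolding partition_on_def disjoint_def by auto
  then have U: "\<Union>?P = {1..n}" by (rule partition_onD1[symmetric])
  have colour: "?c i = (if i \<le> k then 1 else 2)" if "i \<in> {1..n}" for i
    using that by simp
  have "?c \<in> {1..n} \<rightarrow>\<^sub>E {1, 2}" by auto
  moreover have "\<not> contains_p11_21 (?P, ?c)"
  proof -
    have "same_block ?P i j" if "i \<in> {1..n}" "j \<in> {1..n}" "?c i = ?c j" for i j
    proof -
      have "i \<le> k \<longleftrightarrow> j \<le> k"
        using that(3) unfolding colour[OF that(1)] colour[OF that(2)] by (auto split: if_splits)
      then show ?thesis using same_block_split_iff[OF that(1,2)] by blast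
    qed
    then show ?thesis unfolding contains_p11_21_def prod.case U by blast
  qed
  moreover have "\<not> contains_p12_21 (?P, ?c)"
  proof -
    have "j < i" if "i \<in> {1..n}" "?c i = 2" "j \<in> {1..n}" "?c j = 1" for i j
      using that(2,4) unfolding colour[OF that(1)] colour[OF that(3)] by (auto split: if_splits)
    then show ?thesis unfolding contains_p12_21_def prod.case U by (meson less_asym)
  qed
  ultimately show ?thesis
    using P unfolding avoiders_def split_partition_def colored_partitions_def by blast
qed

lemma colour_classes_partition_eq_split_partition:
  assumes P: "partition_on {1..n} P" and c: "c \<in> {1..n} \<rightarrow>\<^sub>E {1, 2}"
    and no_p12_21: "\<not> contains_p12_21 (P, c)"
    and P_eq: "P = {{x \<in> {1..n}. c x = 1}, {x \<in> {1..n}. c x = 2}}"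
  obtains k where "k \<in> {1..<n}" and "(P, c) = split_partition n k"
proof -
  define L where "L = {x \<in> {1..n}. c x = 1}"
  define R where "R = {x \<in> {1..n}. c x = 2}"
  have LR: "L \<union> R = {1..n}" "L \<inter> R = {}" using c unfolding L_def R_def by auto
  have "L \<noteq> {}" "R \<noteq> {}" using P_eq partition_onD3[OF P] unfolding L_def R_def by auto
  have before: "x < y" if x: "x \<in> L" and y: "y \<in> R" for x y
  proof (rule ccontr)
    assume "\<not> x < y"
    moreover have "x \<noteq> y" using x y LR(2) by blast
    ultimately have "y < x" by simp
    moreover have "\<not> same_block P y x"
      using x y LR(2) unfolding P_eq same_block_def L_def R_def by blast
    moreover have "c y = 2" "c x = 1" using x y unfolding L_def R_def by simp_all
    moreover have "y \<in> \<Union>P" "x \<in> \<Union>P" using x y LR(1) partition_onD1[OF P] by auto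
    ultimately show False using no_p12_21 unfolding contains_p12_21_def prod.case by blast
  qed
  define k where "k = Max L"
  have L_eq: "L = {1..k}"
    unfolding k_def
  proof (rule initial_segment_eq_atLeastAtMost)
    show "L \<subseteq> {1..n}" using LR(1) by blast
    show "x < y" if "x \<in> L" "y \<in> {1..n}" "y \<notin> L" for x y
      using before that LR(1) by blast
  qed fact
  have R_eq: "R = {Suc k..n}"
  proof -
    have "R = {1..n} - L" using LR by blast
    then show ?thesis using L_eq by auto
  qed
  have k: "k \<in> {1..<n}" using \<open>L \<noteq> {}\<close> \<open>R \<noteq> {}\<close> L_eq R_eq by auto
  have "c = restrict (\<lambda>i. if i \<le> k then 1 else 2) {1..n}"
  proof
    fix i
    show "c i = restrict (\<lambda>i. if i \<le> k then 1 else 2) {1..n} i"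
    proof (cases "i \<in> {1..n}")
      case True
      then have "c i = (if i \<le> k then 1 else 2)"
        using L_eq R_eq k unfolding L_def R_def by (cases "i \<le> k") auto
      then show ?thesis using True by simp
    next
      case False
      then show ?thesis unfolding restrict_apply if_not_P[OF False] by (rule PiE_arb[OF c])
    qed
  qed
  then have "(P, c) = split_partition n k"
    using P_eq L_eq R_eq unfolding split_partition_def L_def R_def by simp
  with k that show thesis by blast
qed

lemma avoider_cases:
  assumes "\<sigma> \<in> avoiders n" and "n \<ge> 1"
  obtains c where "c \<in> {1..n} \<rightarrow>\<^sub>E {1, 2}" and "\<sigma> = ({{1..n}}, c)"
    | k where "k \<in> {1..<n}" and "\<sigma> = split_partition n k"
proof -
  obtain P c where \<sigma>: "\<sigma> = (P, c)" by fastforce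
  have P: "partition_on {1..n} P" and c: "c \<in> {1..n} \<rightarrow>\<^sub>E {1, 2}"
    and no_p11_21: "\<not> contains_p11_21 (P, c)" and no_p12_21: "\<not> contains_p12_21 (P, c)"
    using assms(1) unfolding \<sigma> avoiders_def colored_partitions_def by blast+
  have same_colour: "same_block P x y" if "x \<in> {1..n}" "y \<in> {1..n}" "c x = c y" for x y
  proof -
    have "x \<in> \<Union>P" "y \<in> \<Union>P" using that partition_onD1[OF P] by auto
    then show ?thesis using no_p11_21 \<open>c x = c y\<close> unfolding contains_p11_21_def prod.case by blast
  qed
  have "{1..n} \<noteq> {}" using assms(2) by simp
  moreover have "c \<in> {1..n} \<rightarrow> {1, 2}" using c unfolding PiE_def by blast
  ultimately have "P = {{1..n}} \<or> P = {{x \<in> {1..n}. c x = 1}, {x \<in> {1..n}. c x = 2}}"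
    by (rule partition_cases_two_colour_classes[OF P _ _ same_colour])
  then show thesis
  proof
    assume "P = {{1..n}}"
    then show thesis using that(1) c \<sigma> by blast
  next
    assume "P = {{x \<in> {1..n}. c x = 1}, {x \<in> {1..n}. c x = 2}}"
    from colour_classes_partition_eq_split_partition[OF P c no_p12_21 this]
    show thesis using that(2) \<sigma> by metis
  qed
qed

lemma avoiders_eq:
  assumes "n \<ge> 1"
  shows "avoiders n
    = (\<lambda>c. ({{1..n}}, c)) ` ({1..n} \<rightarrow>\<^sub>E {1, 2}) \<union> split_partition n ` {1..<n}"
proof (intro equalityI subsetI)
  fix \<sigma> assume "\<sigma> \<in> avoiders n"
  then show "\<sigma> \<in> (\<lambda>c. ({{1..n}}, c)) ` ({1..n} \<rightarrow>\<^sub>E {1, 2}) \<union> split_partition n ` {1..<n}"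
    by (cases rule: avoider_cases[OF _ assms]) auto
qed (use one_block_in_avoiders[OF assms] split_partition_in_avoiders in auto)

lemma inj_on_split_partition: "inj_on (split_partition n) {1..<n}"
proof (rule inj_onI)
  fix k l assume k: "k \<in> {1..<n}" and l: "l \<in> {1..<n}"
    and "split_partition n k = split_partition n l"
  then have "{1..k} \<in> {{1..l}, {Suc l..n}}"
    unfolding split_partition_def by (metis fst_conv insertI1)
  moreover have "1 \<in> {1..k}" and "1 \<notin> {Suc l..n}" using k l by auto
  ultimately have "{1..k} = {1..l}" by blast
  then show "k = l" using k by (simp add: Icc_eq_Icc)
qed

lemma one_block_notin_split_partition:
  assumes "k \<in> {1..<n}"
  shows "({{1..n}}, c) \<noteq> split_partition n k"
proof
  assume "({{1..n}}, c) = split_partition n k"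
  then have "{1..k} = {1..n}" unfolding split_partition_def by (metis fst_conv insertI1 singletonD)
  then show False using assms by (simp add: Icc_eq_Icc)
qed

theorem mainTheorem2:
  fixes n :: nat
  assumes "n \<ge> 1"
  shows "card {\<sigma> \<in> colored_partitions n. \<not> contains_p11_21 \<sigma> \<and> \<not> contains_p12_21 \<sigma>}
           = 2 ^ n + n - 1"
proof -
  let ?S1 = "(\<lambda>c. ({{1..n}}, c)) ` ({1..n} \<rightarrow>\<^sub>E {1, 2::nat})"
  let ?S2 = "split_partition n ` {1..<n}"
  have "card ?S1 = 2 ^ n"
    by (subst card_image) (auto simp: inj_on_def card_funcsetE numeral_2_eq_2)
  moreover have "card ?S2 = n - 1"
    using card_image[OF inj_on_split_partition] by simp
  moreover have "?S1 \<inter> ?S2 = {}" using one_block_notin_split_partition by blast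
  ultimately have "card (?S1 \<union> ?S2) = 2 ^ n + (n - 1)"
    by (simp add: card_Un_disjoint finite_PiE)
  then show ?thesis using avoiders_eq[OF assms] assms unfolding avoiders_def by simp
qed

end
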